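(* Let $\{F_n\}_{n\geq 0}$ be a sequence of positive integers with $F_0=1$ and $F_1=1$, let $\Pi$ be the cobweb poset it determines, and for $n\ge 0$ let $\chi_n(t)=\sum_{x\in P_n}\mu(0,x)\,t^{n-r(x)}$ be the characteristic polynomial of the finite cobweb subposet $P_n$. Then $\chi_0(t)=1$ and $\chi_n(t)=t^n-t^{n-1}$ for all $n\geq 1$.
   Context: Cobweb poset: given the sequence $\{F_n\}_{n\ge 0}$, for $s\geq 0$ let the $s$-th level be $\Phi_s=\{\langle j,s\rangle : 1\leq j\leq F_s\}$, and let $V=\bigcup_{s\geq 0}\Phi_s$. The cobweb poset is $\Pi=(V,\leq)$ where for $x=\langle s,t\rangle$, $y=\langle u,v\rangle$ one has $x\leq y$ iff ($t<v$) or ($t=v$ and $s=u$). Its rank function is $r(x)=s$ for $x\in\Phi_s$. For $n\geq 0$, $P_n$ is the set $\bigcup_{0\leq s\leq n}\Phi_s$ with the induced order; it has unique minimal element $0=\langle 1,0\rangle$. $\mu$ denotes the M\"obius function of $P_n$. *)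

theory Defs
  imports "HOL-Computational_Algebra.Polynomial"
begin

definition mobius :: "'a set \<Rightarrow> ('a \<Rightarrow> 'a \<Rightarrow> bool) \<Rightarrow> 'a \<Rightarrow> 'a \<Rightarrow> int" where
  "mobius A le = (THE m. (\<forall>x y. m x y =
      (if x \<in> A \<and> y \<in> A then
         (if x = y then 1
          else if le x y then - (\<Sum>z\<in>{z\<in>A. le x z \<and> le z y \<and> z \<noteq> y}. m x z)
          else 0)
       else 0)))"

text \<open>Cobweb poset: vertices are pairs (j, s) meaning <j,s>, with level s and 1 \<le> j \<le> F s.\<close>
definition cobweb_le :: "nat \<times> nat \<Rightarrow> nat \<times> nat \<Rightarrow> bool" where
  "cobweb_le x y = (snd x < snd y \<or> (snd x = snd y \<and> fst x = fst y))"

definition cobweb_level :: "(nat \<Rightarrow> nat) \<Rightarrow> nat \<Rightarrow> (nat \<times> nat) set" where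
  "cobweb_level F s = {(j, s) | j. 1 \<le> j \<and> j \<le> F s}"

definition cobweb_P :: "(nat \<Rightarrow> nat) \<Rightarrow> nat \<Rightarrow> (nat \<times> nat) set" where
  "cobweb_P F n = (\<Union>s\<in>{0..n}. cobweb_level F s)"

definition cobweb_rank :: "nat \<times> nat \<Rightarrow> nat" where
  "cobweb_rank x = snd x"

definition cobweb_zero :: "nat \<times> nat" where
  "cobweb_zero = (1, 0)"

definition cobweb_char_poly :: "(nat \<Rightarrow> nat) \<Rightarrow> nat \<Rightarrow> int poly" where
  "cobweb_char_poly F n =
     (\<Sum>x\<in>cobweb_P F n. monom (mobius (cobweb_P F n) cobweb_le cobweb_zero x) (n - cobweb_rank x))"

end

theory Submission
  imports Defs
begin

text \<open>Since F 0 = F 1 = 1, the two lowest levels of P_n form the chain 0 < <1,1>, and the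
  elements strictly above 0 and below an element x of rank s \<ge> 1 are exactly those of P_(s-1).
  The Moebius recursion then gives mu(0,x) = 1, -1, 0 for r(x) = 0, 1, \<ge> 2, so only the two
  monomials t^n and -t^(n-1) of chi_n survive.\<close>

lemma cobweb_le_strict_rank: "cobweb_le z y \<Longrightarrow> z \<noteq> y \<Longrightarrow> snd z < snd y"
  by (auto simp: cobweb_le_def prod_eq_iff)

function cobweb_mu :: "(nat \<times> nat) set \<Rightarrow> nat \<times> nat \<Rightarrow> nat \<times> nat \<Rightarrow> int" where
  "cobweb_mu A x y = (if x \<in> A \<and> y \<in> A then
         (if x = y then 1
          else if cobweb_le x y then - (\<Sum>z\<in>{z\<in>A. cobweb_le x z \<and> cobweb_le z y \<and> z \<noteq> y}. cobweb_mu A x z)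
          else 0)
       else 0)"
  by pat_completeness auto
termination
  by (relation "measure (\<lambda>(A, x, y). snd y)") (auto dest: cobweb_le_strict_rank)

declare cobweb_mu.simps [simp del]

lemma mobius_cobweb_le: "mobius A cobweb_le = cobweb_mu A"
  unfolding mobius_def
proof (rule the_equality)
  fix m :: "nat \<times> nat \<Rightarrow> nat \<times> nat \<Rightarrow> int"
  assume m: "\<forall>x y. m x y = (if x \<in> A \<and> y \<in> A then
         (if x = y then 1
          else if cobweb_le x y then - (\<Sum>z\<in>{z\<in>A. cobweb_le x z \<and> cobweb_le z y \<and> z \<noteq> y}. m x z)
          else 0)
       else 0)"
  have "m x y = cobweb_mu A x y" for x y
  proof (induction y rule: measure_induct_rule [of snd])
    case (less y)
    have "(\<Sum>z\<in>{z\<in>A. cobweb_le x z \<and> cobweb_le z y \<and> z \<noteq> y}. m x z)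
        = (\<Sum>z\<in>{z\<in>A. cobweb_le x z \<and> cobweb_le z y \<and> z \<noteq> y}. cobweb_mu A x z)"
      by (rule sum.cong) (auto intro: less dest: cobweb_le_strict_rank)
    then show ?case
      using m [rule_format, of x y] cobweb_mu.simps [of A x y] by simp
  qed
  then show "m = cobweb_mu A" by (intro ext)
qed (simp add: cobweb_mu.simps [symmetric])

lemma mem_cobweb_P: "x \<in> cobweb_P F n \<longleftrightarrow> 1 \<le> fst x \<and> fst x \<le> F (snd x) \<and> snd x \<le> n"
  by (cases x) (auto simp: cobweb_P_def cobweb_level_def)

lemma finite_cobweb_P: "finite (cobweb_P F n)"
proof (rule finite_subset)
  show "cobweb_P F n \<subseteq> {0..Max (F ` {0..n})} \<times> {0..n}"
    by (auto simp: mem_cobweb_P intro!: le_trans [OF _ Max_ge])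
qed simp

lemma cobweb_P_0: "F 0 = 1 \<Longrightarrow> cobweb_P F 0 = {(1, 0)}"
  by (auto simp: mem_cobweb_P prod_eq_iff)

lemma cobweb_P_strictly_below:
  assumes "F 0 = 1" "x \<in> cobweb_P F n" "snd x \<ge> 1"
  shows "{z \<in> cobweb_P F n. cobweb_le cobweb_zero z \<and> cobweb_le z x \<and> z \<noteq> x}
       = cobweb_P F (snd x - 1)"
  using assms by (auto simp: mem_cobweb_P cobweb_le_def cobweb_zero_def prod_eq_iff)

lemma sum_cobweb_P_two_lowest_levels:
  assumes "F 0 = 1" "F 1 = 1" "n \<ge> 1" "\<And>x. snd x \<ge> 2 \<Longrightarrow> g x = 0"
  shows "(\<Sum>x\<in>cobweb_P F n. g x) = g (1, 0) + g (1, 1)"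
proof -
  have "{(1, 0), (1, 1)} \<subseteq> cobweb_P F n"
    using assms(1-3) by (auto simp: mem_cobweb_P)
  moreover have "g x = 0" if "x \<in> cobweb_P F n - {(1, 0), (1, 1)}" for x
  proof -
    have "snd x \<ge> 2"
    proof (rule ccontr)
      assume "\<not> snd x \<ge> 2"
      then have "snd x = 0 \<or> snd x = 1" by linarith
      then show False
        using that assms(1,2) by (auto simp: mem_cobweb_P prod_eq_iff)
    qed
    then show ?thesis by (rule assms(4))
  qed
  ultimately have "(\<Sum>x\<in>cobweb_P F n. g x) = (\<Sum>x\<in>{(1, 0), (1, 1)}. g x)"
    by (intro sum.mono_neutral_right finite_cobweb_P) auto
  then show ?thesis by simp
qed

definition bottom_chain_mobius :: "nat \<Rightarrow> int" where
  "bottom_chain_mobius s = (if s = 0 then 1 else if s = 1 then -1 else 0)"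

lemma mobius_cobweb_zero:
  assumes F0: "F 0 = 1" and F1: "F 1 = 1" and x: "x \<in> cobweb_P F n"
  shows "mobius (cobweb_P F n) cobweb_le cobweb_zero x = bottom_chain_mobius (snd x)"
  using x unfolding mobius_cobweb_le
proof (induction x rule: measure_induct_rule [of snd])
  case (less x)
  let ?P = "cobweb_P F n"
  have zero: "cobweb_zero \<in> ?P"
    using F0 by (simp add: mem_cobweb_P cobweb_zero_def)
  show ?case
  proof (cases "snd x = 0")
    case True
    then have "x = cobweb_zero"
      using less.prems F0 by (auto simp: mem_cobweb_P cobweb_zero_def prod_eq_iff)
    then show ?thesis
      using zero True by (subst cobweb_mu.simps) (simp add: bottom_chain_mobius_def)
  next
    case False
    have "cobweb_le cobweb_zero x" "x \<noteq> cobweb_zero"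
      using False by (auto simp: cobweb_le_def cobweb_zero_def)
    then have "cobweb_mu ?P cobweb_zero x = - (\<Sum>z\<in>cobweb_P F (snd x - 1). cobweb_mu ?P cobweb_zero z)"
      using zero less.prems False
      by (subst cobweb_mu.simps) (simp add: cobweb_P_strictly_below [OF F0 less.prems])
    also have "\<dots> = - (\<Sum>z\<in>cobweb_P F (snd x - 1). bottom_chain_mobius (snd z))"
      using less.prems False
      by (intro arg_cong [where f = uminus] sum.cong refl less.IH) (auto simp: mem_cobweb_P)
    also have "\<dots> = bottom_chain_mobius (snd x)"
    proof (cases "snd x = 1")
      case True
      then show ?thesis by (simp add: cobweb_P_0 [of F, OF F0] bottom_chain_mobius_def)
    next
      case False
      then show ?thesis
        using \<open>snd x \<noteq> 0\<close>
        by (subst sum_cobweb_P_two_lowest_levels [OF F0 F1]) (auto simp: bottom_chain_mobius_def)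
    qed
    finally show ?thesis .
  qed
qed

lemma cobweb_char_poly_eq:
  assumes "F 0 = 1" "F 1 = 1"
  shows "cobweb_char_poly F n
       = (\<Sum>x\<in>cobweb_P F n. monom (bottom_chain_mobius (snd x)) (n - snd x))"
  unfolding cobweb_char_poly_def cobweb_rank_def
  using mobius_cobweb_zero [OF assms] by (intro sum.cong) auto

theorem mainTheorem3:
  fixes F :: "nat \<Rightarrow> nat"
  assumes "\<forall>n. F n > 0" and "F 0 = 1" and "F 1 = 1"
  shows "cobweb_char_poly F 0 = 1 \<and>
         (\<forall>n\<ge>1. cobweb_char_poly F n = monom 1 n - monom 1 (n - 1))"
proof (intro conjI allI impI)
  show "cobweb_char_poly F 0 = 1"
    using assms(2) by (simp add: cobweb_char_poly_eq [OF assms(2,3)] cobweb_P_0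
        bottom_chain_mobius_def one_poly_def monom_0)
next
  fix n :: nat
  assume "n \<ge> 1"
  then show "cobweb_char_poly F n = monom 1 n - monom 1 (n - 1)"
    by (simp add: cobweb_char_poly_eq [OF assms(2,3)] sum_cobweb_P_two_lowest_levels [OF assms(2,3)]
        bottom_chain_mobius_def minus_monom [symmetric])
qed

end
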